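(* Let $G=(V,E)$ be a finite, connected, undirected graph with $n\ge 2$ vertices. Then for every $r>0$, $f_{G,r}\le 1-\frac{1}{n+r}$.
   Context: The Moran process on $G$ with mutant fitness $r>0$ is the Markov chain $(X_i)_{i\ge0}$ whose state $X_i\subseteq V$ is the set of vertices occupied by mutants; every other vertex is occupied by a non-mutant of fitness $1$. Write $W(S)=r|S|+|V\setminus S|$ for the total fitness. Given $X_i=S$, one step is: choose a vertex $x$ with probability $r/W(S)$ if $x\in S$ and $1/W(S)$ if $x\notin S$; then choose a neighbour $y$ of $x$ uniformly at random; set $X_{i+1}=S\cup\{y\}$ if $x\in S$ and $X_{i+1}=S\setminus\{y\}$ if $x\notin S$. Fixation means $X_i=V$ for some $i$. For $x\in V$, $f_{G,r}(x)$ is the probability of fixation when $X_0=\{x\}$, and $f_{G,r}=\frac1n\sum_{x\in V}f_{G,r}(x)$ is the fixation probability when the initial single mutant is placed at a uniformly random vertex. *)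

theory Defs
  imports Complex_Main
begin

definition ugraph :: "'a set \<Rightarrow> ('a \<Rightarrow> 'a \<Rightarrow> bool) \<Rightarrow> bool" where
  "ugraph V E \<longleftrightarrow> finite V \<and> (\<forall>x y. E x y \<longrightarrow> x \<in> V \<and> y \<in> V)
     \<and> (\<forall>x y. E x y \<longrightarrow> E y x) \<and> (\<forall>x. \<not> E x x)"

definition connected_graph :: "'a set \<Rightarrow> ('a \<Rightarrow> 'a \<Rightarrow> bool) \<Rightarrow> bool" where
  "connected_graph V E \<longleftrightarrow>
     (\<forall>x\<in>V. \<forall>y\<in>V. (x, y) \<in> {(a, b). a \<in> V \<and> b \<in> V \<and> E a b}\<^sup>*)"

definition nbrs :: "'a set \<Rightarrow> ('a \<Rightarrow> 'a \<Rightarrow> bool) \<Rightarrow> 'a \<Rightarrow> 'a set" where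
  "nbrs V E x = {y \<in> V. E x y}"

definition moran_W :: "'a set \<Rightarrow> real \<Rightarrow> 'a set \<Rightarrow> real" where
  "moran_W V r S = r * real (card S) + real (card (V - S))"

text \<open>One-step transition probability of the Moran process from state S to state T:
choose x with probability r/W(S) (x in S) or 1/W(S) (x not in S), then a uniformly
random neighbour y of x; the new state is S \<union> {y} or S - {y} respectively.\<close>
definition moran_P :: "'a set \<Rightarrow> ('a \<Rightarrow> 'a \<Rightarrow> bool) \<Rightarrow> real \<Rightarrow> 'a set \<Rightarrow> 'a set \<Rightarrow> real" where
  "moran_P V E r S T =
     (\<Sum>x\<in>S. \<Sum>y\<in>nbrs V E x.
        if insert y S = T then r / moran_W V r S / real (card (nbrs V E x)) else 0)
   + (\<Sum>x\<in>V - S. \<Sum>y\<in>nbrs V E x.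
        if S - {y} = T then 1 / moran_W V r S / real (card (nbrs V E x)) else 0)"

primrec moran_Pk :: "'a set \<Rightarrow> ('a \<Rightarrow> 'a \<Rightarrow> bool) \<Rightarrow> real \<Rightarrow> nat \<Rightarrow> 'a set \<Rightarrow> 'a set \<Rightarrow> real" where
  "moran_Pk V E r 0 S T = (if S = T then 1 else 0)"
| "moran_Pk V E r (Suc k) S T = (\<Sum>U\<in>Pow V. moran_P V E r S U * moran_Pk V E r k U T)"

text \<open>Fixation probability from a single mutant at x: since V is absorbing,
P(X_i = V for some i) = lim_k P(X_k = V).\<close>
definition fix_prob_vertex :: "'a set \<Rightarrow> ('a \<Rightarrow> 'a \<Rightarrow> bool) \<Rightarrow> real \<Rightarrow> 'a \<Rightarrow> real" where
  "fix_prob_vertex V E r x = lim (\<lambda>k. moran_Pk V E r k {x} V)"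

definition fix_prob :: "'a set \<Rightarrow> ('a \<Rightarrow> 'a \<Rightarrow> bool) \<Rightarrow> real \<Rightarrow> real" where
  "fix_prob V E r = (\<Sum>x\<in>V. fix_prob_vertex V E r x) / real (card V)"

end

theory Submission
  imports Defs
begin

text \<open>The empty state is absorbing, so extinction in the very first step bounds extinction
from below: \<open>f(x) \<le> 1 - e(x)\<close>, where \<open>e(x)\<close> is the probability that the step from \<open>{x}\<close>
reaches \<open>{}\<close>. A non-mutant neighbour \<open>z\<close> of \<open>x\<close> is chosen and then chooses \<open>x\<close> with
probability \<open>1 / ((r + n - 1) deg z)\<close>; summing \<open>e(x)\<close> over all \<open>x\<close>, each vertex \<open>z\<close>
contributes \<open>deg z\<close> such terms, so \<open>\<Sum>x e(x) = n / (r + n - 1)\<close> and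
\<open>f \<le> 1 - 1 / (r + n - 1) \<le> 1 - 1 / (n + r)\<close>.\<close>

lemma nbrs_subset: "nbrs V E x \<subseteq> V"
  unfolding nbrs_def by auto

lemma finite_nbrs: "finite V \<Longrightarrow> finite (nbrs V E x)"
  using finite_subset[OF nbrs_subset] .

lemma nbrs_nonempty:
  assumes "connected_graph V E" and "card V \<ge> 2" and x: "x \<in> V"
  shows "nbrs V E x \<noteq> {}"
proof -
  have "\<not> V \<subseteq> {x}"
    using assms(2) card_mono[of "{x}" V] by force
  then obtain y where y: "y \<in> V" "y \<noteq> x" by blast
  have "(x, y) \<in> {(a, b). a \<in> V \<and> b \<in> V \<and> E a b}\<^sup>*"
    using assms(1) x y unfolding connected_graph_def by blast
  then obtain z where "z \<in> V" "E x z"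
    using y(2) by (cases rule: converse_rtranclE) auto
  then show ?thesis unfolding nbrs_def by blast
qed

lemma moran_W_nonneg: "r > 0 \<Longrightarrow> 0 \<le> moran_W V r S"
  unfolding moran_W_def by simp

lemma moran_P_nonneg: "r > 0 \<Longrightarrow> 0 \<le> moran_P V E r S T"
  unfolding moran_P_def using moran_W_nonneg[of r V S]
  by (intro add_nonneg_nonneg sum_nonneg) auto

lemma moran_Pk_nonneg: "r > 0 \<Longrightarrow> 0 \<le> moran_Pk V E r k S T"
  by (induction k arbitrary: S) (auto intro!: sum_nonneg mult_nonneg_nonneg moran_P_nonneg)

lemma moran_P_sum_le_one:
  assumes "finite V" and "S \<subseteq> V" and r: "r > 0"
  shows "(\<Sum>U\<in>Pow V. moran_P V E r S U) \<le> 1"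
proof -
  define W where "W = moran_W V r S"
  have "0 \<le> W" using moran_W_nonneg[OF r] W_def by simp
  have "(\<Sum>U\<in>Pow V. moran_P V E r S U) =
     (\<Sum>x\<in>S. \<Sum>y\<in>nbrs V E x. \<Sum>U\<in>Pow V. if insert y S = U then r / W / card (nbrs V E x) else 0)
   + (\<Sum>x\<in>V - S. \<Sum>y\<in>nbrs V E x. \<Sum>U\<in>Pow V. if S - {y} = U then 1 / W / card (nbrs V E x) else 0)"
    unfolding moran_P_def W_def[symmetric] sum.distrib by (simp add: sum.swap[of _ "Pow V"])
  also have "\<dots> = (\<Sum>x\<in>S. \<Sum>y\<in>nbrs V E x. r / W / card (nbrs V E x))
     + (\<Sum>x\<in>V - S. \<Sum>y\<in>nbrs V E x. 1 / W / card (nbrs V E x))"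
    using assms(1,2) nbrs_subset[of V E]
    by (auto simp only: sum.delta' intro!: sum.cong arg_cong2[where f="(+)"]) auto
  also have "\<dots> \<le> (\<Sum>x\<in>S. r / W) + (\<Sum>x\<in>V - S. 1 / W)"
    using r \<open>0 \<le> W\<close> by (intro add_mono sum_mono) (auto simp: field_simps)
  also have "\<dots> = (r * card S + card (V - S)) / W"
    by (simp add: add_divide_distrib)
  also have "\<dots> \<le> 1"
    unfolding W_def moran_W_def by simp
  finally show ?thesis .
qed

lemma moran_Pk_le_one:
  assumes "finite V" and "r > 0" and "S \<subseteq> V"
  shows "moran_Pk V E r k S T \<le> 1"
  using assms(3)
proof (induction k arbitrary: S)
  case (Suc k)
  have "moran_Pk V E r (Suc k) S T \<le> (\<Sum>U\<in>Pow V. moran_P V E r S U)"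
    unfolding moran_Pk.simps
    using Suc.IH assms(2) by (intro sum_mono mult_right_le_one_le moran_P_nonneg moran_Pk_nonneg) auto
  also have "\<dots> \<le> 1"
    using moran_P_sum_le_one[OF assms(1) Suc.prems assms(2)] .
  finally show ?case .
qed simp

lemma moran_P_from_empty: "U \<noteq> {} \<Longrightarrow> moran_P V E r {} U = 0"
  unfolding moran_P_def by simp

lemma moran_Pk_from_empty:
  assumes "T \<noteq> {}"
  shows "moran_Pk V E r k {} T = 0"
proof (induction k)
  case (Suc k)
  have "moran_P V E r {} U * moran_Pk V E r k U T = 0" for U
    using Suc.IH by (cases "U = {}") (simp_all add: moran_P_from_empty)
  then show ?case
    unfolding moran_Pk.simps by (intro sum.neutral ballI)
qed (use assms in simp)

lemma moran_P_full_full: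
  assumes "finite V" and "V \<noteq> {}" and deg: "\<And>x. x \<in> V \<Longrightarrow> nbrs V E x \<noteq> {}" and "r > 0"
  shows "moran_P V E r V V = 1"
proof -
  have "moran_P V E r V V =
      (\<Sum>x\<in>V. \<Sum>y\<in>nbrs V E x. if insert y V = V then r / moran_W V r V / card (nbrs V E x) else 0)"
    unfolding moran_P_def by (simp only: Diff_cancel sum.empty add_0_right)
  also have "\<dots> = (\<Sum>x\<in>V. \<Sum>y\<in>nbrs V E x. r / (r * card V) / card (nbrs V E x))"
    using nbrs_subset[of V E] by (intro sum.cong refl) (auto simp: moran_W_def insert_absorb)
  also have "\<dots> = (\<Sum>x\<in>V. 1 / card V)"
    using deg finite_nbrs[OF assms(1)] \<open>r > 0\<close> by (intro sum.cong) auto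
  also have "\<dots> = 1"
    using assms(1,2) by simp
  finally show ?thesis .
qed

lemma moran_Pk_full_mono:
  assumes "finite V" and "r > 0" and full: "moran_P V E r V V = 1"
  shows "moran_Pk V E r k S V \<le> moran_Pk V E r (Suc k) S V"
proof (induction k arbitrary: S)
  case 0
  have "moran_Pk V E r (Suc 0) V V = moran_P V E r V V"
    using assms(1) by (simp add: if_distrib[of "\<lambda>c. _ * c"] sum.delta' cong: if_cong)
  then show ?case
    using full moran_Pk_nonneg[OF assms(2), of V E "Suc 0" S V] by (cases "S = V") simp_all
next
  case (Suc k)
  then show ?case
    unfolding moran_Pk.simps(2)[of V E r "Suc k"] moran_Pk.simps(2)[of V E r k]
    by (intro sum_mono mult_left_mono moran_P_nonneg assms(2))
qed

text \<open>Any path to the full state avoids \<open>{}\<close> after its first step.\<close>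
lemma moran_Pk_full_le_one_minus_extinction:
  assumes "finite V" and "r > 0" and "S \<subseteq> V" and "S \<noteq> V"
  shows "moran_Pk V E r k S V \<le> 1 - moran_P V E r S {}"
proof -
  let ?P = "moran_P V E r S"
  have "(\<Sum>U\<in>Pow V. ?P U) = ?P {} + (\<Sum>U\<in>Pow V - {{}}. ?P U)"
    using assms(1) by (simp add: sum.remove[of "Pow V" "{}"])
  then have rest: "(\<Sum>U\<in>Pow V - {{}}. ?P U) \<le> 1 - ?P {}"
    using moran_P_sum_le_one[OF assms(1,3,2), where E=E] by simp
  show ?thesis
  proof (cases k)
    case 0
    have "0 \<le> (\<Sum>U\<in>Pow V - {{}}. ?P U)"
      using assms(2) by (intro sum_nonneg moran_P_nonneg)
    then show ?thesis using 0 rest assms(4) by simp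
  next
    case (Suc j)
    have "V \<noteq> {}" using assms(3,4) by blast
    have "moran_Pk V E r k S V = (\<Sum>U\<in>Pow V - {{}}. ?P U * moran_Pk V E r j U V)"
      using assms(1) \<open>V \<noteq> {}\<close>
      by (simp add: Suc sum.remove[of "Pow V" "{}"] moran_Pk_from_empty)
    also have "\<dots> \<le> (\<Sum>U\<in>Pow V - {{}}. ?P U)"
      using assms(1,2)
      by (intro sum_mono mult_right_le_one_le moran_P_nonneg moran_Pk_nonneg moran_Pk_le_one) auto
    finally show ?thesis using rest by simp
  qed
qed

lemma fix_prob_vertex_le_one_minus_extinction:
  assumes "finite V" and "r > 0" and "x \<in> V" and "{x} \<noteq> V"
    and full: "moran_P V E r V V = 1"
  shows "fix_prob_vertex V E r x \<le> 1 - moran_P V E r {x} {}"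
proof -
  let ?p = "\<lambda>k. moran_Pk V E r k {x} V"
  have bound: "\<And>k. ?p k \<le> 1 - moran_P V E r {x} {}"
    using moran_Pk_full_le_one_minus_extinction[OF assms(1,2)] assms(3,4) by simp
  have "incseq ?p"
    by (rule incseq_SucI) (rule moran_Pk_full_mono[OF assms(1,2) full])
  then obtain L where L: "?p \<longlonglongrightarrow> L"
    using incseq_convergent bound by blast
  then have "L \<le> 1 - moran_P V E r {x} {}"
    using bound by (intro LIMSEQ_le_const2) auto
  then show ?thesis
    unfolding fix_prob_vertex_def using limI[OF L] by simp
qed

lemma moran_P_singleton_extinction:
  assumes "ugraph V E" and x: "x \<in> V"
  shows "moran_P V E r {x} {} =
    (\<Sum>z\<in>V. if x \<in> nbrs V E z then 1 / moran_W V r {x} / card (nbrs V E z) else 0)"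
proof -
  have fin: "finite V" and "x \<notin> nbrs V E x"
    using assms(1) unfolding ugraph_def nbrs_def by auto
  define c where "c z = 1 / moran_W V r {x} / card (nbrs V E z)" for z
  have "moran_P V E r {x} {} = (\<Sum>z\<in>V - {x}. \<Sum>y\<in>nbrs V E z. if y = x then c z else 0)"
    unfolding moran_P_def c_def by (auto intro!: sum.cong)
  also have "\<dots> = (\<Sum>z\<in>V - {x}. if x \<in> nbrs V E z then c z else 0)"
    using finite_nbrs[OF fin] by (simp add: sum.delta')
  also have "\<dots> = (\<Sum>z\<in>V. if x \<in> nbrs V E z then c z else 0)"
    using sum.remove[OF fin x, of "\<lambda>z. if x \<in> nbrs V E z then c z else 0"] \<open>x \<notin> nbrs V E x\<close>
    by simp
  finally show ?thesis unfolding c_def .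
qed

lemma sum_moran_P_singleton_extinction:
  fixes r :: real
  assumes g: "ugraph V E" and deg: "\<And>x. x \<in> V \<Longrightarrow> nbrs V E x \<noteq> {}"
  shows "(\<Sum>x\<in>V. moran_P V E r {x} {}) = card V / (r + card V - 1)"
proof -
  have fin: "finite V" using g unfolding ugraph_def by simp
  define W where "W = r + card V - 1"
  have W: "moran_W V r {x} = W" if "x \<in> V" for x
  proof -
    have "1 \<le> card V" using fin that by (simp add: Suc_le_eq card_gt_0_iff) blast
    then show ?thesis
      unfolding moran_W_def W_def using fin that by (simp add: card_Diff_singleton of_nat_diff)
  qed
  have "(\<Sum>x\<in>V. moran_P V E r {x} {}) =
      (\<Sum>x\<in>V. \<Sum>z\<in>V. if x \<in> nbrs V E z then 1 / W / card (nbrs V E z) else 0)"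
    using moran_P_singleton_extinction[OF g] W by (intro sum.cong) auto
  also have "\<dots> = (\<Sum>z\<in>V. \<Sum>x\<in>V. if x \<in> nbrs V E z then 1 / W / card (nbrs V E z) else 0)"
    by (rule sum.swap)
  also have "\<dots> = (\<Sum>z\<in>V. card (nbrs V E z) * (1 / W / card (nbrs V E z)))"
    using fin nbrs_subset[of V E] by (simp add: sum.If_cases Int_absorb1)
  also have "\<dots> = (\<Sum>z\<in>V. 1 / W)"
    using deg finite_nbrs[OF fin] by (intro sum.cong) auto
  finally show ?thesis unfolding W_def by simp
qed

theorem lemma2:
  fixes V :: "'a set" and E :: "'a \<Rightarrow> 'a \<Rightarrow> bool" and r :: real
  assumes "ugraph V E" and "connected_graph V E" and "card V \<ge> 2" and "r > 0"
  shows "fix_prob V E r \<le> 1 - 1 / (real (card V) + r)"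
proof -
  define n where "n = real (card V)"
  have fin: "finite V" using assms(1) unfolding ugraph_def by simp
  have "n \<ge> 2" using assms(3) unfolding n_def by simp
  have deg: "\<And>x. x \<in> V \<Longrightarrow> nbrs V E x \<noteq> {}"
    using nbrs_nonempty[OF assms(2,3)] .
  have full: "moran_P V E r V V = 1"
    using moran_P_full_full[OF fin _ deg assms(4)] assms(3) by (metis card.empty not_numeral_le_zero)
  have "\<And>x. x \<in> V \<Longrightarrow> {x} \<noteq> V" using assms(3) by auto
  then have "(\<Sum>x\<in>V. fix_prob_vertex V E r x) \<le> (\<Sum>x\<in>V. 1 - moran_P V E r {x} {})"
    using fix_prob_vertex_le_one_minus_extinction[OF fin assms(4) _ _ full] by (intro sum_mono) blast
  also have "\<dots> = n - n / (r + n - 1)"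
    using sum_moran_P_singleton_extinction[OF assms(1) deg, of r] fin
    unfolding sum_subtractf n_def by simp
  finally have "fix_prob V E r \<le> (n - n / (r + n - 1)) / n"
    unfolding fix_prob_def n_def[symmetric] using \<open>n \<ge> 2\<close> by (simp add: divide_right_mono)
  also have "\<dots> = 1 - 1 / (r + n - 1)"
    using \<open>n \<ge> 2\<close> by (simp add: field_simps)
  also have "\<dots> \<le> 1 - 1 / (n + r)"
    using \<open>n \<ge> 2\<close> assms(4) by (simp add: frac_le)
  finally show ?thesis unfolding n_def .
qed

end
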